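(* Let $\mathcal{F}$ be a linear $3$-uniform family with $\Delta(\mathcal{F})=d$ and $\nu(\mathcal{F})=\nu$. Then $|\mathcal{F}|\leq \max\{2d\nu,10\nu\}$.
   Context: A family $\mathcal{F}$ is a finite collection of distinct subsets of a vertex set. It is $3$-uniform if every member has exactly $3$ elements, and linear if $|A\cap B|\leq 1$ for all distinct $A,B\in\mathcal{F}$. A matching is a collection of pairwise disjoint members; $\nu(\mathcal{F})$ is the maximum size of a matching. For a vertex $x$, $\mathcal{F}_x=\{A\in\mathcal{F}:x\in A\}$ and $\Delta(\mathcal{F})=\max_x|\mathcal{F}_x|$. *)

theory Defs
  imports Main
begin

definition uniform3 :: "'a set set \<Rightarrow> bool" where
  "uniform3 F \<longleftrightarrow> (\<forall>A\<in>F. card A = 3)"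

definition linear_family :: "'a set set \<Rightarrow> bool" where
  "linear_family F \<longleftrightarrow> (\<forall>A\<in>F. \<forall>B\<in>F. A \<noteq> B \<longrightarrow> card (A \<inter> B) \<le> 1)"

definition is_matching :: "'a set set \<Rightarrow> 'a set set \<Rightarrow> bool" where
  "is_matching F M \<longleftrightarrow> M \<subseteq> F \<and> (\<forall>A\<in>M. \<forall>B\<in>M. A \<noteq> B \<longrightarrow> A \<inter> B = {})"

text \<open>Matching number: maximum size of a matching (F is finite, so this is a max).\<close>
definition matching_number :: "'a set set \<Rightarrow> nat" where
  "matching_number F = Max {card M | M. is_matching F M}"

definition star :: "'a set set \<Rightarrow> 'a \<Rightarrow> 'a set set" where
  "star F x = {A \<in> F. x \<in> A}"

text \<open>Maximum degree: max over vertices (only vertices in some member matter; 0 for empty family).\<close>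
definition max_degree :: "'a set set \<Rightarrow> nat" where
  "max_degree F = Max ({0} \<union> {card (star F x) | x. x \<in> \<Union>F})"

end

theory Submission
  imports Defs Complex_Main
begin

text \<open>Fix a maximum matching \<open>M\<close> with vertex set \<open>V\<close>. By maximality every member of \<open>F\<close> meets \<open>V\<close>;
  each member \<open>E\<close> distributes one unit of charge equally among the points of \<open>E \<inter> V\<close>, so \<open>|F|\<close> is the
  total charge on \<open>V\<close>. A point \<open>v\<close> of a matching edge \<open>A\<close> receives \<open>1/3\<close> from \<open>A\<close>, \<open>1\<close> from each
  pendant member (meeting \<open>V\<close> only in \<open>v\<close>) and at most \<open>1/2\<close> from the rest, so its charge is at most
  \<open>(d + p(v))/2 - 1/6\<close> with \<open>p(v)\<close> the number of pendant members at \<open>v\<close>. Pendant members at two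
  different points of \<open>A\<close> must intersect, since otherwise they could replace \<open>A\<close> in \<open>M\<close>; with
  linearity this gives \<open>p(v) \<le> 2\<close> for all points of \<open>A\<close> as soon as two of them carry pendant members.
  Either way the charge on \<open>A\<close> is at most \<open>max (2d) 10\<close>.\<close>

lemma card_eq_sum_charge:
  assumes "finite F" "finite V" "\<And>E. E \<in> F \<Longrightarrow> E \<inter> V \<noteq> {}"
  shows "real (card F) = (\<Sum>v\<in>V. \<Sum>E\<in>{E \<in> F. v \<in> E}. 1 / real (card (E \<inter> V)))"
proof -
  have "(\<Sum>v\<in>{v \<in> V. v \<in> E}. 1 / real (card (E \<inter> V))) = 1" if "E \<in> F" for E
  proof -
    have "{v \<in> V. v \<in> E} = E \<inter> V" by auto
    moreover have "card (E \<inter> V) \<noteq> 0" using assms(2,3) that by auto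
    ultimately show ?thesis by simp
  qed
  then have "(\<Sum>E\<in>F. \<Sum>v\<in>{v \<in> V. v \<in> E}. 1 / real (card (E \<inter> V))) = (\<Sum>E\<in>F. 1)"
    by (rule sum.cong[OF refl])
  then have "real (card F) = (\<Sum>E\<in>F. \<Sum>v\<in>{v \<in> V. v \<in> E}. 1 / real (card (E \<inter> V)))"
    by simp
  also have "\<dots> = (\<Sum>v\<in>V. \<Sum>E\<in>{E \<in> F. v \<in> E}. 1 / real (card (E \<inter> V)))"
    by (rule sum.swap_restrict[OF assms(1,2)])
  finally show ?thesis .
qed

lemma matching_number_attained:
  assumes "finite F"
  obtains M where "is_matching F M" "card M = matching_number F"
    "\<And>M'. is_matching F M' \<Longrightarrow> card M' \<le> matching_number F"
proof -
  let ?S = "{card M | M. is_matching F M}"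
  have "?S \<subseteq> {0..card F}"
    using assms unfolding is_matching_def by (auto intro: card_mono)
  then have fin: "finite ?S" using finite_subset by blast
  have "is_matching F {}" unfolding is_matching_def by auto
  then have "Max ?S \<in> ?S" using Max_in[OF fin] by blast
  then obtain M where "is_matching F M" "card M = matching_number F"
    unfolding matching_number_def by auto
  moreover have "card M' \<le> matching_number F" if "is_matching F M'" for M'
    using Max_ge[OF fin] that unfolding matching_number_def by blast
  ultimately show thesis using that by blast
qed

lemma card_star_le_max_degree:
  assumes "finite F"
  shows "card (star F x) \<le> max_degree F"
proof (cases "x \<in> \<Union>F")
  case True
  let ?D = "{0} \<union> {card (star F x) | x. x \<in> \<Union>F}"
  have "?D \<subseteq> {0..card F}" using assms unfolding star_def by (auto intro: card_mono)
  then have "finite ?D" using finite_subset by blast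
  then show ?thesis using True unfolding max_degree_def by (blast intro: Max_ge)
next
  case False
  then have "star F x = {}" unfolding star_def by auto
  then show ?thesis by simp
qed

locale maximum_matching =
  fixes F M :: "'a set set"
  assumes finite_F: "finite F" and uniform: "uniform3 F" and linear: "linear_family F"
    and matching: "is_matching F M"
    and maximum: "\<And>M'. is_matching F M' \<Longrightarrow> card M' \<le> card M"
begin

definition covered :: "'a set" where
  "covered = \<Union>M"

definition pendant :: "'a \<Rightarrow> 'a set set" where
  "pendant v = {E \<in> F. E \<inter> covered = {v}}"

definition charge :: "'a \<Rightarrow> real" where
  "charge v = (\<Sum>E\<in>star F v. 1 / real (card (E \<inter> covered)))"

lemma M_subset: "M \<subseteq> F"
  using matching unfolding is_matching_def by auto

lemma M_disjoint: "A \<in> M \<Longrightarrow> B \<in> M \<Longrightarrow> A \<noteq> B \<Longrightarrow> A \<inter> B = {}"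
  using matching unfolding is_matching_def by auto

lemma card_member: "E \<in> F \<Longrightarrow> card E = 3"
  using uniform unfolding uniform3_def by auto

lemma finite_member: "E \<in> F \<Longrightarrow> finite E"
  using card_member by (metis card.infinite zero_neq_numeral)

lemma finite_M: "finite M"
  using M_subset finite_F finite_subset by auto

lemma finite_covered: "finite covered"
  unfolding covered_def using finite_M M_subset finite_member by auto

lemma subset_covered: "A \<in> M \<Longrightarrow> A \<subseteq> covered"
  unfolding covered_def by auto

lemma member_meets_covered: "E \<in> F \<Longrightarrow> E \<inter> covered \<noteq> {}"
proof
  assume E: "E \<in> F" "E \<inter> covered = {}"
  have "E \<noteq> {}" using card_member[OF E(1)] by auto
  then have "E \<notin> M" using E unfolding covered_def by auto
  have "is_matching F (insert E M)"
    using matching E unfolding is_matching_def covered_def by blast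
  then have "card (insert E M) \<le> card M" by (rule maximum)
  then show False using \<open>E \<notin> M\<close> finite_M by simp
qed

lemma pendant_not_in_M: "E \<in> pendant v \<Longrightarrow> E \<notin> M"
proof
  assume E: "E \<in> pendant v" "E \<in> M"
  then have "E = {v}" using subset_covered unfolding pendant_def by auto
  then show False using E(1) card_member[of E] unfolding pendant_def by auto
qed

lemma finite_star: "finite (star F v)"
  using finite_F unfolding star_def by auto

lemma matching_edge_in_star: "A \<in> M \<Longrightarrow> v \<in> A \<Longrightarrow> A \<in> star F v"
  using M_subset unfolding star_def by auto

lemma pendant_subset_star: "pendant v \<subseteq> star F v"
  unfolding pendant_def star_def by auto

lemma pendant_pendant_intersect:
  assumes A: "A \<in> M" "a \<in> A" "b \<in> A" "a \<noteq> b"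
    and Ea: "Ea \<in> pendant a" and Eb: "Eb \<in> pendant b"
  shows "Ea \<inter> Eb \<noteq> {}"
proof
  assume disjoint: "Ea \<inter> Eb = {}"
  have Ea_F: "Ea \<in> F" "Ea \<inter> covered = {a}" and Eb_F: "Eb \<in> F" "Eb \<inter> covered = {b}"
    using Ea Eb unfolding pendant_def by auto
  have "Ea \<noteq> Eb" using Ea_F Eb_F A(4) by auto
  have misses_rest: "E \<inter> B = {}" if "E \<inter> covered = {x}" "x \<in> A" "B \<in> M - {A}" for E B x
  proof -
    have "E \<inter> B \<subseteq> {x}" using that subset_covered[of B] by auto
    moreover have "x \<notin> B" using that M_disjoint[OF A(1), of B] by auto
    ultimately show ?thesis by auto
  qed
  let ?M = "insert Ea (insert Eb (M - {A}))"
  have "is_matching F ?M"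
    unfolding is_matching_def
  proof (intro conjI ballI impI)
    show "?M \<subseteq> F" using M_subset Ea_F Eb_F by auto
  next
    fix X Y assume XY: "X \<in> ?M" "Y \<in> ?M" "X \<noteq> Y"
    have Ea_B: "Ea \<inter> B = {}" and Eb_B: "Eb \<inter> B = {}" if "B \<in> M - {A}" for B
      using misses_rest[OF Ea_F(2) A(2) that] misses_rest[OF Eb_F(2) A(3) that] .
    have "X = Ea \<or> X = Eb \<or> X \<in> M - {A}" "Y = Ea \<or> Y = Eb \<or> Y \<in> M - {A}"
      using XY by auto
    then show "X \<inter> Y = {}"
      using XY(3) by (elim disjE; simp add: disjoint Ea_B Eb_B Int_commute M_disjoint)
  qed
  then have "card ?M \<le> card M" by (rule maximum)
  moreover have "Eb \<notin> M" "Ea \<notin> M" using pendant_not_in_M Ea Eb by auto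
  ultimately show False
    using A(1) finite_M \<open>Ea \<noteq> Eb\<close> by (simp add: card_Suc_Diff1)
qed

text \<open>The pendant members at \<open>a\<close> pairwise share only \<open>a\<close>, and each meets a fixed pendant member at
  \<open>b\<close> in one of its two points outside \<open>covered\<close>.\<close>
lemma card_pendant_le_2:
  assumes A: "A \<in> M" "a \<in> A" "b \<in> A" "a \<noteq> b" and "pendant b \<noteq> {}"
  shows "card (pendant a) \<le> 2"
proof -
  obtain Eb where Eb: "Eb \<in> pendant b" using assms(5) by auto
  have Eb_F: "Eb \<in> F" "Eb \<inter> covered = {b}" using Eb unfolding pendant_def by auto
  have a_covered: "a \<in> covered" and b_covered: "b \<in> covered" using A subset_covered by auto
  define f where "f E = (SOME x. x \<in> E \<inter> Eb)" for E
  have f: "f E \<in> E \<inter> Eb" if "E \<in> pendant a" for E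
    using pendant_pendant_intersect[OF A that Eb] unfolding f_def by (metis ex_in_conv someI_ex)
  have "f ` pendant a \<subseteq> Eb - {b}"
  proof
    fix y assume "y \<in> f ` pendant a"
    then obtain E where E: "E \<in> pendant a" "y = f E" by auto
    then have "y \<in> E" "y \<in> Eb" using f by auto
    moreover have "y \<noteq> b" using E(1) \<open>y \<in> E\<close> b_covered A(4) unfolding pendant_def by auto
    ultimately show "y \<in> Eb - {b}" by auto
  qed
  moreover have "inj_on f (pendant a)"
  proof
    fix E E' assume E: "E \<in> pendant a" "E' \<in> pendant a" "f E = f E'"
    show "E = E'"
    proof (rule ccontr)
      assume "E \<noteq> E'"
      have F: "E \<in> F" "E' \<in> F" "a \<in> E" "a \<in> E'" using E unfolding pendant_def by auto
      have "f E \<in> E" "f E \<in> E'" "f E \<in> Eb" using f[OF E(1)] f[OF E(2)] E(3) by auto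
      moreover have "a \<notin> Eb" using Eb_F a_covered A(4) by auto
      ultimately have "{a, f E} \<subseteq> E \<inter> E'" "f E \<noteq> a" using F by auto
      then have "card {a, f E} \<le> card (E \<inter> E')" using finite_member F by (intro card_mono) auto
      then show False
        using linear F \<open>E \<noteq> E'\<close> \<open>f E \<noteq> a\<close> unfolding linear_family_def by fastforce
    qed
  qed
  ultimately have "card (pendant a) \<le> card (Eb - {b})"
    using finite_member Eb_F by (intro card_inj_on_le) auto
  also have "\<dots> = 2" using card_member[OF Eb_F(1)] Eb_F by (subst card_Diff_singleton) auto
  finally show ?thesis .
qed

lemma charge_le:
  assumes A: "A \<in> M" "v \<in> A"
  shows "charge v \<le> (real (card (star F v)) + card (pendant v)) / 2 - 1 / 6"
proof -
  let ?c = "\<lambda>E. 1 / real (card (E \<inter> covered))"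
  have A_F: "A \<in> F" using A M_subset by auto
  have A_star: "A \<in> star F v" using matching_edge_in_star[OF A] .
  have pendant_rest: "pendant v \<subseteq> star F v - {A}"
    using pendant_subset_star pendant_not_in_M A by blast
  have "?c A = 1 / 3" using subset_covered[OF A(1)] card_member[OF A_F] by (simp add: Int_absorb2)
  have "?c E \<le> 1 / 2 + (if E \<in> pendant v then 1 / 2 else 0)"
    if E_star: "E \<in> star F v" for E
  proof (cases "E \<in> pendant v")
    case True
    then show ?thesis unfolding pendant_def by simp
  next
    case False
    then obtain u where "u \<in> E \<inter> covered" "u \<noteq> v"
      using E_star A subset_covered unfolding star_def pendant_def by blast
    moreover have "v \<in> E \<inter> covered" using E_star A subset_covered unfolding star_def by auto
    ultimately have "card {u, v} \<le> card (E \<inter> covered)"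
      using finite_covered by (intro card_mono) auto
    then show ?thesis using False \<open>u \<noteq> v\<close> by (simp add: divide_simps)
  qed
  then have "(\<Sum>E\<in>star F v - {A}. ?c E)
      \<le> (\<Sum>E\<in>star F v - {A}. 1 / 2 + (if E \<in> pendant v then 1 / 2 else 0))"
    by (intro sum_mono) auto
  also have "\<dots> = (card (star F v) - 1) / 2 + card (pendant v) / 2"
    using finite_star A_star pendant_rest by (simp add: sum.distrib sum.If_cases Int_absorb1)
  also have "\<dots> = (real (card (star F v)) - 1) / 2 + card (pendant v) / 2"
  proof -
    have "card (star F v) \<noteq> 0" using A_star finite_star[of v] by auto
    then show ?thesis by simp
  qed
  finally show ?thesis
    unfolding charge_def sum.remove[OF finite_star A_star] \<open>?c A = 1 / 3\<close> by (simp add: field_simps)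
qed

lemma charge_matching_edge_le:
  assumes A: "A \<in> M" and degree: "\<And>x. card (star F x) \<le> d"
  shows "(\<Sum>v\<in>A. charge v) \<le> max (2 * real d) 10"
proof -
  let ?p = "\<lambda>v. real (card (pendant v))"
  have card_A: "card A = 3" using A M_subset card_member by auto
  have p_le: "?p v \<le> real d - 1" if "v \<in> A" for v
  proof -
    have "pendant v \<subset> star F v"
      using pendant_subset_star matching_edge_in_star[OF A that] pendant_not_in_M[of A v] A by blast
    then have "card (pendant v) < card (star F v)" by (intro psubset_card_mono finite_star)
    then show ?thesis using degree[of v] by linarith
  qed
  have "charge v \<le> (real d + ?p v) / 2 - 1 / 6" if "v \<in> A" for v
  proof -
    have "real (card (star F v)) \<le> real d" using degree[of v] by simp
    then show ?thesis using charge_le[OF A that] by (simp add: field_simps)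
  qed
  then have "(\<Sum>v\<in>A. charge v) \<le> (\<Sum>v\<in>A. (real d + ?p v) / 2 - 1 / 6)"
    by (rule sum_mono)
  also have "\<dots> = 3 * real d / 2 - 1 / 2 + (\<Sum>v\<in>A. ?p v) / 2"
    using card_A by (simp add: sum.distrib sum_subtractf sum_divide_distrib[symmetric])
  also have "\<dots> \<le> max (2 * real d) 10"
  proof (cases "\<exists>x\<in>A. \<forall>y\<in>A - {x}. pendant y = {}")
    case True
    then obtain x where x: "x \<in> A" "\<forall>y\<in>A - {x}. pendant y = {}" by blast
    have "(\<Sum>v\<in>A. ?p v) = ?p x"
      using x card_A by (subst sum.remove[of A x]) (auto intro: card_ge_0_finite)
    then show ?thesis using p_le[OF x(1)] by simp
  next
    case False
    have "?p v \<le> 2" if v: "v \<in> A" for v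
    proof -
      obtain y where "y \<in> A - {v}" "pendant y \<noteq> {}" using False v by blast
      then show ?thesis using card_pendant_le_2[OF A v, of y] by auto
    qed
    then have "(\<Sum>v\<in>A. ?p v) \<le> 6" using sum_bounded_above[of A ?p 2] card_A by simp
    then show ?thesis by simp
  qed
  finally show ?thesis .
qed

lemma card_F_eq_sum_charge: "real (card F) = (\<Sum>A\<in>M. \<Sum>v\<in>A. charge v)"
proof -
  have "real (card F) = (\<Sum>v\<in>covered. charge v)"
    using card_eq_sum_charge[OF finite_F finite_covered member_meets_covered]
    unfolding charge_def star_def .
  also have "\<dots> = (\<Sum>A\<in>M. \<Sum>v\<in>A. charge v)"
    unfolding covered_def using sum.Union_disjoint[of M charge] finite_M finite_member M_subset M_disjoint
    by auto
  finally show ?thesis .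
qed

end

theorem theorem3:
  fixes F :: "'a set set" and d \<nu> :: nat
  assumes "finite F"
    and "uniform3 F"
    and "linear_family F"
    and "max_degree F = d"
    and "matching_number F = \<nu>"
  shows "card F \<le> max (2 * d * \<nu>) (10 * \<nu>)"
proof -
  obtain M where M: "is_matching F M" "card M = \<nu>" "\<And>M'. is_matching F M' \<Longrightarrow> card M' \<le> \<nu>"
    using matching_number_attained[OF assms(1)] assms(5) by metis
  interpret maximum_matching F M using assms(1-3) M by unfold_locales auto
  have degree: "card (star F x) \<le> d" for x
    using card_star_le_max_degree[OF assms(1)] assms(4) by blast
  have "real (card F) = (\<Sum>A\<in>M. \<Sum>v\<in>A. charge v)" by (rule card_F_eq_sum_charge)
  also have "\<dots> \<le> (\<Sum>A\<in>M. max (2 * real d) 10)"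
    by (intro sum_mono charge_matching_edge_le degree)
  also have "\<dots> = real (max (2 * d * \<nu>) (10 * \<nu>))"
    using M(2) by (simp add: max_def)
  finally show ?thesis by linarith
qed

end
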